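(* Let $I$ be a finite set of players and, for each $\nu\in I$, let $\succeq_\nu$ be a binary relation on $\mathbb{R}^n=\prod_{\nu\in I}\mathbb{R}^{n_\nu}$. Define $T:\mathbb{R}^n\rightrightarrows\mathbb{R}^n$ by $$T(x)=\prod_{\nu\in I}\operatorname{conv}\big(N_\nu(x)\cap S_\nu(0,1)\big).$$ Assume that the set-valued map $U^s_\nu:\mathbb{R}^n\rightrightarrows\mathbb{R}^{n_\nu}$ is lower hemicontinuous for every $\nu\in I$. Then $T$ is upper hemicontinuous with convex and compact values. Moreover, if in addition $U^s_\nu(x)$ is convex for each $x\in\mathbb{R}^n$ and each $\nu\in I$, then $T$ has non-empty values.
   Context: Vectors $x\in\mathbb{R}^n$ are written $x=(x^\nu,x^{-\nu})$. The induced relation is $x^\nu\succeq_{\nu,w^{-\nu}}y^\nu$ iff $(x^\nu,w^{-\nu})\succeq_\nu(y^\nu,w^{-\nu})$, with asymmetric part $\succ_{\nu,w^{-\nu}}$ ($a\succ b$ iff $a\succeq b$ and not $b\succeq a$). $U^s_\nu(x)=\{y^\nu\in\mathbb{R}^{n_\nu}:y^\nu\succ_{\nu,x^{-\nu}}x^\nu\}$. For $A\subset\mathbb{R}^m$, $z\in\mathbb{R}^m$, $\mathscr{N}_A(z)=\{z^*:\langle z^*,y-z\rangle\le0\ \forall y\in A\}$ if $A\ne\emptyset$ and $\mathscr{N}_A(z)=\mathbb{R}^m$ if $A=\emptyset$; $N_\nu(x)=\mathscr{N}_{U^s_\nu(x)}(x^\nu)$. $S_\nu(0,1)$ is the unit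 sphere of $\mathbb{R}^{n_\nu}$, and $\operatorname{conv}$ denotes convex hull. A set-valued map $F$ is upper hemicontinuous at $x$ if for every open $V\supset F(x)$ the set $\{z:F(z)\subset V\}$ is a neighborhood of $x$; lower hemicontinuous at $x$ if for every open $V$ with $V\cap F(x)\ne\emptyset$ the set $\{z:F(z)\cap V\neq\emptyset\}$ is a neighborhood of $x$; these hold for the map if they hold at every point. *)

theory Defs
  imports "HOL-Analysis.Analysis"
begin

text \<open>The coordinates of R^n are indexed by a finite type 'j; the map
  p :: 'j => 'i assigns each coordinate to its owning player (players = the finite
  type 'i). The space R^{n_nu} of player nu is identified with the coordinate
  subspace of real^'j supported on the coordinates owned by nu.\<close>

definition player_space :: "('j::finite \<Rightarrow> 'i) \<Rightarrow> 'i \<Rightarrow> (real^'j) set" where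
  "player_space p \<nu> = {y. \<forall>j. p j \<noteq> \<nu> \<longrightarrow> y $ j = 0}"

definition blk :: "('j::finite \<Rightarrow> 'i) \<Rightarrow> 'i \<Rightarrow> real^'j \<Rightarrow> real^'j" where
  "blk p \<nu> x = (\<chi> j. if p j = \<nu> then x $ j else 0)"

definition join :: "('j::finite \<Rightarrow> 'i) \<Rightarrow> 'i \<Rightarrow> real^'j \<Rightarrow> real^'j \<Rightarrow> real^'j" where
  "join p \<nu> y w = (\<chi> j. if p j = \<nu> then y $ j else w $ j)"

definition strict_part :: "('a \<Rightarrow> 'a \<Rightarrow> bool) \<Rightarrow> 'a \<Rightarrow> 'a \<Rightarrow> bool" where
  "strict_part r a b \<longleftrightarrow> r a b \<and> \<not> r b a"

definition Us :: "('j::finite \<Rightarrow> 'i) \<Rightarrow> ('i \<Rightarrow> real^'j \<Rightarrow> real^'j \<Rightarrow> bool) \<Rightarrow> 'i \<Rightarrow> real^'j \<Rightarrow> (real^'j) set" where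
  "Us p R \<nu> x = {y \<in> player_space p \<nu>.
      strict_part (R \<nu>) (join p \<nu> y x) (join p \<nu> (blk p \<nu> x) x)}"

text \<open>normal cone in the ambient space E (= R^m); E itself if A is empty\<close>
definition normal_cone :: "'a::real_inner set \<Rightarrow> 'a set \<Rightarrow> 'a \<Rightarrow> 'a set" where
  "normal_cone E A z = (if A = {} then E else {zs \<in> E. \<forall>y\<in>A. inner zs (y - z) \<le> 0})"

definition Nnu :: "('j::finite \<Rightarrow> 'i) \<Rightarrow> ('i \<Rightarrow> real^'j \<Rightarrow> real^'j \<Rightarrow> bool) \<Rightarrow> 'i \<Rightarrow> real^'j \<Rightarrow> (real^'j) set" where
  "Nnu p R \<nu> x = normal_cone (player_space p \<nu>) (Us p R \<nu> x) (blk p \<nu> x)"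

definition unit_sphere_nu :: "('j::finite \<Rightarrow> 'i) \<Rightarrow> 'i \<Rightarrow> (real^'j) set" where
  "unit_sphere_nu p \<nu> = {y \<in> player_space p \<nu>. norm y = 1}"

definition Tmap :: "('j::finite \<Rightarrow> 'i) \<Rightarrow> ('i \<Rightarrow> real^'j \<Rightarrow> real^'j \<Rightarrow> bool) \<Rightarrow> real^'j \<Rightarrow> (real^'j) set" where
  "Tmap p R x = {z. \<forall>\<nu>. blk p \<nu> z \<in> convex hull (Nnu p R \<nu> x \<inter> unit_sphere_nu p \<nu>)}"

definition upper_hemicont :: "('a::topological_space \<Rightarrow> 'b::topological_space set) \<Rightarrow> bool" where
  "upper_hemicont F \<longleftrightarrow> (\<forall>x V. open V \<and> F x \<subseteq> V \<longrightarrow>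
      (\<exists>W. open W \<and> x \<in> W \<and> W \<subseteq> {z. F z \<subseteq> V}))"

definition lower_hemicont :: "('a::topological_space \<Rightarrow> 'b::topological_space set) \<Rightarrow> bool" where
  "lower_hemicont F \<longleftrightarrow> (\<forall>x V. open V \<and> V \<inter> F x \<noteq> {} \<longrightarrow>
      (\<exists>W. open W \<and> x \<in> W \<and> W \<subseteq> {z. F z \<inter> V \<noteq> {}}))"

end

theory Submission
  imports Defs
begin

text \<open>
  The directions \<open>N\<^sub>\<nu>(x) \<inter> S\<^sub>\<nu>(0,1)\<close> form a map into a compact sphere with closed graph,
  hence an upper hemicontinuous one: lower hemicontinuity of \<open>U\<^sup>s\<^sub>\<nu>\<close> approximates every
  strictly preferred point at the limit by strictly preferred points at nearby arguments, where the
  normal inequality holds and passes to the limit. For compact-valued maps upper hemicontinuity is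
  equivalent to its metric form (\<open>F x'\<close> lies in the \<open>\<epsilon>\<close>-neighbourhood of \<open>F x\<close> for \<open>x'\<close> near \<open>x\<close>),
  and the metric form survives convex hulls, since the \<open>\<epsilon>\<close>-neighbourhood of a convex set is convex,
  and the finite product over the players' blocks; this yields \<open>T\<close>. Finally \<open>U\<^sup>s\<^sub>\<nu>(x)\<close> never
  contains \<open>x\<^sup>\<nu>\<close> (strict preference is irreflexive), so when it is convex a hyperplane separating
  the two inside the nontrivial player space provides a unit normal vector.
\<close>

lemma subspace_player_space: "subspace (player_space p \<nu>)"
  unfolding subspace_def player_space_def by auto

lemma closed_player_space: "closed (player_space p \<nu>)"
proof -
  have "player_space p \<nu> = (\<Inter>j\<in>{j. p j \<noteq> \<nu>}. {y. y $ j = 0})"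
    unfolding player_space_def by auto
  then show ?thesis
    by (simp add: closed_INT closed_Collect_eq continuous_on_component continuous_on_const)
qed

lemma player_space_nonzero:
  assumes "p j = \<nu>" shows "player_space p \<nu> \<noteq> {0}"
proof -
  have "axis j 1 \<in> player_space p \<nu>" using assms by (simp add: player_space_def axis_def)
  then show ?thesis by (metis axis_eq_0_iff singletonD zero_neq_one)
qed

lemma compact_unit_sphere_nu: "compact (unit_sphere_nu p \<nu>)"
proof -
  have "unit_sphere_nu p \<nu> = player_space p \<nu> \<inter> sphere 0 1"
    by (auto simp: unit_sphere_nu_def)
  then show ?thesis by (simp add: closed_Int_compact closed_player_space)
qed

lemma blk_in_player_space: "blk p \<nu> z \<in> player_space p \<nu>"
  unfolding blk_def player_space_def by auto

lemma linear_blk: "linear (blk p \<nu>)"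
  by (rule linearI) (auto simp: blk_def vec_eq_iff)

lemma sum_blk:
  fixes p :: "'j::finite \<Rightarrow> 'i::finite"
  shows "(\<Sum>\<nu>\<in>UNIV. blk p \<nu> z) = z"
  by (simp add: vec_eq_iff sum_component blk_def sum.delta')

lemma dist_le_sum_dist_blk:
  fixes p :: "'j::finite \<Rightarrow> 'i::finite"
  shows "dist z v \<le> (\<Sum>\<nu>\<in>UNIV. dist (blk p \<nu> z) (blk p \<nu> v))"
proof -
  have "dist z v = norm (\<Sum>\<nu>\<in>UNIV. blk p \<nu> z - blk p \<nu> v)"
    by (simp add: dist_norm sum_subtractf sum_blk)
  also have "\<dots> \<le> (\<Sum>\<nu>\<in>UNIV. norm (blk p \<nu> z - blk p \<nu> v))"
    by (rule norm_sum)
  finally show ?thesis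
    by (simp add: dist_norm)
qed

lemma blk_sum_player_space:
  fixes c :: "'i::finite \<Rightarrow> real^'j::finite"
  assumes "\<And>\<nu>. c \<nu> \<in> player_space p \<nu>"
  shows "blk p \<mu> (\<Sum>\<nu>\<in>UNIV. c \<nu>) = c \<mu>"
proof -
  have "(\<Sum>\<nu>\<in>UNIV. c \<nu> $ j) = c (p j) $ j" for j
    using assms by (subst sum.remove[of _ "p j"]) (auto simp: player_space_def intro!: sum.neutral)
  then show ?thesis using assms by (simp add: vec_eq_iff sum_component blk_def player_space_def)
qed

lemma convex_blockwise:
  assumes "\<And>\<nu>. convex (C \<nu>)"
  shows "convex {z. \<forall>\<nu>. blk p \<nu> z \<in> C \<nu>}"
proof -
  have "{z. \<forall>\<nu>. blk p \<nu> z \<in> C \<nu>} = (\<Inter>\<nu>. blk p \<nu> -` C \<nu>)"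
    by auto
  then show ?thesis
    by (simp add: convex_INT convex_linear_vimage linear_blk assms)
qed

lemma compact_blockwise:
  fixes p :: "'j::finite \<Rightarrow> 'i::finite"
  assumes "\<And>\<nu>. compact (C \<nu>)"
  shows "compact {z. \<forall>\<nu>. blk p \<nu> z \<in> C \<nu>}"
proof -
  have "closed (blk p \<nu> -` C \<nu>)" for \<nu>
    using linear_blk[unfolded linear_conv_bounded_linear]
    by (intro continuous_closed_vimage compact_imp_closed assms linear_continuous_at)
  moreover have "{z. \<forall>\<nu>. blk p \<nu> z \<in> C \<nu>} = (\<Inter>\<nu>. blk p \<nu> -` C \<nu>)"
    by auto
  ultimately have "closed {z. \<forall>\<nu>. blk p \<nu> z \<in> C \<nu>}"
    by (simp add: closed_INT)
  moreover have "\<forall>\<nu>. \<exists>b. \<forall>c\<in>C \<nu>. norm c \<le> b"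
    using assms by (simp add: compact_imp_bounded flip: bounded_iff)
  then obtain B where B: "\<And>\<nu> c. c \<in> C \<nu> \<Longrightarrow> norm c \<le> B \<nu>"
    by metis
  have "norm z \<le> (\<Sum>\<nu>\<in>UNIV. B \<nu>)" if "\<forall>\<nu>. blk p \<nu> z \<in> C \<nu>" for z
  proof -
    have "norm z \<le> (\<Sum>\<nu>\<in>UNIV. norm (blk p \<nu> z))"
      using norm_sum[of "\<lambda>\<nu>. blk p \<nu> z" UNIV] by (simp add: sum_blk)
    also have "\<dots> \<le> (\<Sum>\<nu>\<in>UNIV. B \<nu>)"
      using that B by (intro sum_mono) blast
    finally show ?thesis .
  qed
  then have "bounded {z. \<forall>\<nu>. blk p \<nu> z \<in> C \<nu>}"
    unfolding bounded_iff by blast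
  ultimately show ?thesis
    by (simp add: compact_eq_bounded_closed)
qed

lemma blockwise_nonempty:
  fixes p :: "'j::finite \<Rightarrow> 'i::finite"
  assumes "\<And>\<nu>. C \<nu> \<noteq> {}" and "\<And>\<nu>. C \<nu> \<subseteq> player_space p \<nu>"
  shows "{z. \<forall>\<nu>. blk p \<nu> z \<in> C \<nu>} \<noteq> {}"
proof -
  have "\<forall>\<nu>. \<exists>c. c \<in> C \<nu>"
    using assms(1) by blast
  then obtain c where c: "\<And>\<nu>. c \<nu> \<in> C \<nu>"
    by metis
  then have "blk p \<mu> (\<Sum>\<nu>\<in>UNIV. c \<nu>) = c \<mu>" for \<mu>
    using assms(2) by (intro blk_sum_player_space) blast
  then have "(\<Sum>\<nu>\<in>UNIV. c \<nu>) \<in> {z. \<forall>\<nu>. blk p \<nu> z \<in> C \<nu>}"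
    using c by simp
  then show ?thesis
    by blast
qed

lemma mem_normal_cone: "w \<in> normal_cone E A z \<longleftrightarrow> w \<in> E \<and> (\<forall>y\<in>A. inner w (y - z) \<le> 0)"
  by (simp add: normal_cone_def)

lemma closed_normal_cone:
  assumes "closed E" shows "closed (normal_cone E A z)"
proof -
  have "normal_cone E A z = E \<inter> (\<Inter>y\<in>A. {w. inner (y - z) w \<le> 0})"
    by (auto simp: mem_normal_cone inner_commute)
  then show ?thesis
    by (simp add: assms closed_Int closed_INT closed_halfspace_le)
qed

lemma normal_cone_has_unit_vector:
  fixes V A :: "'a::euclidean_space set"
  assumes V: "subspace V" "V \<noteq> {0}" and A: "convex A" "A \<subseteq> V" and z: "z \<in> V" "z \<notin> A"
  obtains w where "w \<in> normal_cone V A z" and "norm w = 1"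
proof -
  have "\<exists>a\<in>V. a \<noteq> 0 \<and> (\<forall>y\<in>A. inner a (y - z) \<le> 0)"
  proof (cases "A = {}")
    case True
    then show ?thesis
      using V subspace_0 by blast
  next
    case False
    let ?S = "\<Union>x\<in>{z}. \<Union>y\<in>A. {x - y}"
    have "convex ?S"
      by (intro convex_differences convex_singleton A)
    moreover have "?S \<noteq> {}" and "0 \<notin> ?S"
      using False z by auto
    ultimately obtain a where a: "a \<in> span ?S" "a \<noteq> 0" "\<And>s. s \<in> ?S \<Longrightarrow> 0 \<le> a \<bullet> s"
      by (rule separating_hyperplane_set_0_inspan) blast
    have "?S \<subseteq> V"
      using A z V by (auto intro: subspace_diff)
    then have "a \<in> V"
      using a(1) span_minimal[OF _ V(1)] by blast
    moreover have "inner a (y - z) \<le> 0" if "y \<in> A" for y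
      using a(3)[of "z - y"] that by (simp add: inner_diff_right)
    ultimately show ?thesis
      using a(2) by blast
  qed
  then obtain a where a: "a \<in> V" "a \<noteq> 0" "\<And>y. y \<in> A \<Longrightarrow> inner a (y - z) \<le> 0"
    by blast
  have "sgn a \<in> V"
    using a(1) V(1) by (simp add: sgn_div_norm subspace_scale)
  moreover have "inner (sgn a) (y - z) \<le> 0" if "y \<in> A" for y
    using a(3)[OF that] by (simp add: sgn_div_norm mult_nonneg_nonpos)
  ultimately have "sgn a \<in> normal_cone V A z"
    by (simp add: mem_normal_cone)
  moreover have "norm (sgn a) = 1"
    using a(2) by (simp add: norm_sgn)
  ultimately show thesis
    by (rule that)
qed

definition hausdorff_upper_semicont :: "('a::topological_space \<Rightarrow> 'b::metric_space set) \<Rightarrow> bool" where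
  "hausdorff_upper_semicont F \<longleftrightarrow>
     (\<forall>x e. 0 < e \<longrightarrow> (\<forall>\<^sub>F x' in nhds x. F x' \<subseteq> (\<Union>v\<in>F x. ball v e)))"

lemma upper_hemicont_iff_hausdorff_upper_semicont:
  assumes "\<And>x. compact (F x)"
  shows "upper_hemicont F \<longleftrightarrow> hausdorff_upper_semicont F"
proof
  assume uhc: "upper_hemicont F"
  show "hausdorff_upper_semicont F"
    unfolding hausdorff_upper_semicont_def
  proof (intro allI impI)
    fix x and e :: real
    assume "0 < e"
    then have "open (\<Union>v\<in>F x. ball v e) \<and> F x \<subseteq> (\<Union>v\<in>F x. ball v e)"
      by (auto intro: open_UN)
    with uhc obtain W where "open W" "x \<in> W" "W \<subseteq> {z. F z \<subseteq> (\<Union>v\<in>F x. ball v e)}"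
      unfolding upper_hemicont_def by meson
    then show "\<forall>\<^sub>F x' in nhds x. F x' \<subseteq> (\<Union>v\<in>F x. ball v e)"
      unfolding eventually_nhds by blast
  qed
next
  assume hus: "hausdorff_upper_semicont F"
  show "upper_hemicont F"
    unfolding upper_hemicont_def
  proof (intro allI impI)
    fix x V
    assume "open V \<and> F x \<subseteq> V"
    then obtain e where "0 < e" and "(\<Union>v\<in>F x. ball v e) \<subseteq> V"
      using compact_subset_open_imp_ball_epsilon_subset[of "F x" V] assms by blast
    moreover have "\<forall>\<^sub>F x' in nhds x. F x' \<subseteq> (\<Union>v\<in>F x. ball v e)"
      using hus \<open>0 < e\<close> unfolding hausdorff_upper_semicont_def by blast
    ultimately have "\<forall>\<^sub>F x' in nhds x. F x' \<subseteq> V"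
      by (auto elim!: eventually_mono)
    then show "\<exists>W. open W \<and> x \<in> W \<and> W \<subseteq> {z. F z \<subseteq> V}"
      unfolding eventually_nhds by auto
  qed
qed

lemma hausdorff_upper_semicont_convex_hull:
  fixes F :: "'a::topological_space \<Rightarrow> 'b::real_normed_vector set"
  assumes "hausdorff_upper_semicont F"
  shows "hausdorff_upper_semicont (\<lambda>x. convex hull F x)"
  unfolding hausdorff_upper_semicont_def
proof (intro allI impI)
  fix x and e :: real
  assume "0 < e"
  let ?V = "\<Union>v\<in>convex hull F x. ball v e"
  have "ball v e = (\<Union>u\<in>ball 0 e. {v + u})" for v :: 'b
    using ball_translation[of v 0 e] by (simp add: UNION_singleton_eq_range)
  then have "?V = (\<Union>v\<in>convex hull F x. \<Union>u\<in>ball 0 e. {v + u})"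
    by (intro SUP_cong refl)
  then have "convex ?V"
    by (metis convex_sums convex_convex_hull convex_ball)
  have "(\<Union>v\<in>F x. ball v e) \<subseteq> ?V"
    by (rule UN_mono[OF hull_subset]) simp
  moreover have "\<forall>\<^sub>F x' in nhds x. F x' \<subseteq> (\<Union>v\<in>F x. ball v e)"
    using assms \<open>0 < e\<close> unfolding hausdorff_upper_semicont_def by blast
  ultimately have "\<forall>\<^sub>F x' in nhds x. F x' \<subseteq> ?V"
    by (auto elim!: eventually_mono)
  then show "\<forall>\<^sub>F x' in nhds x. convex hull F x' \<subseteq> ?V"
    by (rule eventually_mono) (simp add: hull_minimal \<open>convex ?V\<close>)
qed

lemma hausdorff_upper_semicont_blockwise:
  fixes p :: "'j::finite \<Rightarrow> 'i::finite" and C :: "'i \<Rightarrow> 'a::topological_space \<Rightarrow> (real^'j) set"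
  assumes "\<And>\<nu>. hausdorff_upper_semicont (C \<nu>)" and "\<And>\<nu> x. C \<nu> x \<subseteq> player_space p \<nu>"
  shows "hausdorff_upper_semicont (\<lambda>x. {z. \<forall>\<nu>. blk p \<nu> z \<in> C \<nu> x})"
  unfolding hausdorff_upper_semicont_def
proof (intro allI impI)
  fix x and e :: real
  assume "0 < e"
  define k where "k = real CARD('i)"
  have "0 < e / k"
    using \<open>0 < e\<close> by (simp add: k_def)
  then have "\<forall>\<^sub>F x' in nhds x. \<forall>\<nu>. C \<nu> x' \<subseteq> (\<Union>c\<in>C \<nu> x. ball c (e / k))"
    using assms(1) by (intro eventually_all_finite) (simp add: hausdorff_upper_semicont_def)
  then show "\<forall>\<^sub>F x' in nhds x.
      {z. \<forall>\<nu>. blk p \<nu> z \<in> C \<nu> x'} \<subseteq> (\<Union>v\<in>{z. \<forall>\<nu>. blk p \<nu> z \<in> C \<nu> x}. ball v e)"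
  proof (rule eventually_mono, intro subsetI)
    fix x' z
    assume near: "\<forall>\<nu>. C \<nu> x' \<subseteq> (\<Union>c\<in>C \<nu> x. ball c (e / k))"
      and z: "z \<in> {z. \<forall>\<nu>. blk p \<nu> z \<in> C \<nu> x'}"
    have "\<forall>\<nu>. \<exists>c\<in>C \<nu> x. dist (blk p \<nu> z) c < e / k"
      using near z by (force simp: dist_commute)
    then obtain c where c: "\<And>\<nu>. c \<nu> \<in> C \<nu> x" "\<And>\<nu>. dist (blk p \<nu> z) (c \<nu>) < e / k"
      by metis
    have blk_c: "blk p \<mu> (\<Sum>\<nu>\<in>UNIV. c \<nu>) = c \<mu>" for \<mu>
      using c(1) assms(2) by (intro blk_sum_player_space) blast
    then have "(\<Sum>\<nu>\<in>UNIV. c \<nu>) \<in> {z. \<forall>\<nu>. blk p \<nu> z \<in> C \<nu> x}"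
      using c(1) by simp
    moreover have "dist z (\<Sum>\<nu>\<in>UNIV. c \<nu>) < e"
    proof -
      have "dist z (\<Sum>\<nu>\<in>UNIV. c \<nu>) \<le> (\<Sum>\<nu>\<in>UNIV. dist (blk p \<nu> z) (c \<nu>))"
        using dist_le_sum_dist_blk[of z "\<Sum>\<nu>\<in>UNIV. c \<nu>" p] by (simp add: blk_c)
      also have "\<dots> < (\<Sum>\<nu>\<in>(UNIV :: 'i set). e / k)"
        using c(2) by (intro sum_strict_mono) auto
      also have "\<dots> = e"
        by (simp add: k_def)
      finally show ?thesis .
    qed
    ultimately show "z \<in> (\<Union>v\<in>{z. \<forall>\<nu>. blk p \<nu> z \<in> C \<nu> x}. ball v e)"
      by (auto simp: dist_commute)
  qed
qed

lemma upper_hemicont_if_closed_graph: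
  fixes F :: "'a::topological_space \<Rightarrow> 'b::t2_space set"
  assumes "compact K" and "\<And>x. F x \<subseteq> K" and "closed {(x, w). w \<in> F x}"
  shows "upper_hemicont F"
  unfolding upper_hemicont_def
proof (intro allI impI)
  fix x V
  assume "open V \<and> F x \<subseteq> V"
  then have "compact (K - V)" and "{x} \<times> (K - V) \<subseteq> - {(x, w). w \<in> F x}"
    using assms(1) by (auto intro: compact_diff)
  then obtain W where "x \<in> W" "open W" "W \<times> (K - V) \<subseteq> - {(x, w). w \<in> F x}"
    using Elementary_Topology.tube_lemma assms(3) open_Compl by metis
  then show "\<exists>W. open W \<and> x \<in> W \<and> W \<subseteq> {z. F z \<subseteq> V}"
    using assms(2) by blast
qed

lemma lower_hemicont_normal_cone_limit:
  fixes U :: "'a::topological_space \<Rightarrow> 'b::real_inner set"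
  assumes lhc: "lower_hemicont U" and xs: "xs \<longlonglongrightarrow> x" and zs: "zs \<longlonglongrightarrow> z" and ws: "ws \<longlonglongrightarrow> w"
    and normal: "\<And>n. ws n \<in> normal_cone E (U (xs n)) (zs n)" and bounded: "\<And>n. norm (ws n) \<le> 1"
    and y: "y \<in> U x"
  shows "inner w (y - z) \<le> 0"
proof (rule field_le_epsilon)
  fix e :: real
  assume "0 < e"
  then have "open (ball y e) \<and> ball y e \<inter> U x \<noteq> {}"
    using y by (metis IntI centre_in_ball empty_iff open_ball)
  then obtain W where "open W" "x \<in> W" and W: "W \<subseteq> {x'. U x' \<inter> ball y e \<noteq> {}}"
    using lhc unfolding lower_hemicont_def by meson
  have "\<forall>\<^sub>F n in sequentially. xs n \<in> W"
    using xs \<open>open W\<close> \<open>x \<in> W\<close> by (rule topological_tendstoD)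
  then have "\<forall>\<^sub>F n in sequentially. inner (ws n) (y - zs n) \<le> e"
  proof (rule eventually_mono)
    fix n
    assume "xs n \<in> W"
    then have "U (xs n) \<inter> ball y e \<noteq> {}"
      using W by blast
    then obtain y' where y': "y' \<in> U (xs n)" "dist y y' < e"
      by (metis disjoint_iff mem_ball)
    have "inner (ws n) (y - zs n) = inner (ws n) (y' - zs n) + inner (ws n) (y - y')"
      by (simp add: inner_diff_right)
    also have "\<dots> \<le> norm (ws n) * norm (y - y')"
      using normal[of n] y'(1) norm_cauchy_schwarz[of "ws n" "y - y'"]
      by (auto simp: mem_normal_cone)
    also have "\<dots> \<le> 1 * e"
      using bounded[of n] y'(2) by (intro mult_mono) (auto simp: dist_norm)
    finally show "inner (ws n) (y - zs n) \<le> e"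
      by simp
  qed
  moreover have "(\<lambda>n. inner (ws n) (y - zs n)) \<longlonglongrightarrow> inner w (y - z)"
    by (intro tendsto_intros ws zs)
  ultimately show "inner w (y - z) \<le> 0 + e"
    by (simp add: tendsto_upperbound)
qed

lemma closed_graph_normal_sphere:
  fixes p :: "'j::finite \<Rightarrow> 'i"
  assumes "lower_hemicont (Us p R \<nu>)"
  shows "closed {(x, w). w \<in> Nnu p R \<nu> x \<inter> unit_sphere_nu p \<nu>}"
  unfolding closed_sequential_limits
proof (intro allI impI, elim conjE)
  fix s :: "nat \<Rightarrow> (real^'j) \<times> (real^'j)" and l
  assume graph: "\<forall>n. s n \<in> {(x, w). w \<in> Nnu p R \<nu> x \<inter> unit_sphere_nu p \<nu>}" and "s \<longlonglongrightarrow> l"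
  define xs ws where "xs = fst \<circ> s" and "ws = snd \<circ> s"
  obtain x w where l: "l = (x, w)"
    by fastforce
  have xs: "xs \<longlonglongrightarrow> x" and ws: "ws \<longlonglongrightarrow> w"
    using tendsto_fst[OF \<open>s \<longlonglongrightarrow> l\<close>] tendsto_snd[OF \<open>s \<longlonglongrightarrow> l\<close>]
    by (simp_all add: xs_def ws_def l comp_def)
  have "(\<lambda>n. blk p \<nu> (xs n)) \<longlonglongrightarrow> blk p \<nu> x"
    using linear_blk[unfolded linear_conv_bounded_linear] xs by (rule bounded_linear.tendsto)
  moreover have "ws n \<in> Nnu p R \<nu> (xs n)" and ws_sphere: "ws n \<in> unit_sphere_nu p \<nu>" for n
    using graph by (simp_all add: xs_def ws_def case_prod_beta)
  ultimately have "inner w (y - blk p \<nu> x) \<le> 0" if "y \<in> Us p R \<nu> x" for y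
    using assms xs ws that
    by (intro lower_hemicont_normal_cone_limit[where E = "player_space p \<nu>"])
      (auto simp: Nnu_def unit_sphere_nu_def)
  moreover have "w \<in> unit_sphere_nu p \<nu>"
    using compact_imp_closed[OF compact_unit_sphere_nu] ws_sphere ws by (rule closed_sequentially)
  ultimately show "l \<in> {(x, w). w \<in> Nnu p R \<nu> x \<inter> unit_sphere_nu p \<nu>}"
    by (auto simp: l Nnu_def mem_normal_cone unit_sphere_nu_def)
qed

lemma compact_normal_sphere: "compact (Nnu p R \<nu> x \<inter> unit_sphere_nu p \<nu>)"
  unfolding Nnu_def
  by (intro closed_Int_compact closed_normal_cone closed_player_space compact_unit_sphere_nu)

lemma normal_sphere_nonempty:
  assumes "surj p" and "convex (Us p R \<nu> x)"
  shows "Nnu p R \<nu> x \<inter> unit_sphere_nu p \<nu> \<noteq> {}"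
proof -
  obtain j where "p j = \<nu>"
    using assms(1) by (metis surjD)
  have "blk p \<nu> x \<notin> Us p R \<nu> x"
    by (simp add: Us_def strict_part_def)
  moreover have "Us p R \<nu> x \<subseteq> player_space p \<nu>"
    by (auto simp: Us_def)
  moreover have "player_space p \<nu> \<noteq> {0}"
    using \<open>p j = \<nu>\<close> by (rule player_space_nonzero)
  ultimately obtain w where "w \<in> Nnu p R \<nu> x" and "norm w = 1"
    unfolding Nnu_def
    by (metis normal_cone_has_unit_vector subspace_player_space assms(2) blk_in_player_space)
  then show ?thesis
    by (auto simp: Nnu_def unit_sphere_nu_def mem_normal_cone)
qed

theorem proposition1:
  fixes p :: "'j::finite \<Rightarrow> 'i::finite"
    and R :: "'i \<Rightarrow> real^'j \<Rightarrow> real^'j \<Rightarrow> bool"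
  assumes "surj p"
    and "\<forall>\<nu>. lower_hemicont (Us p R \<nu>)"
  shows "upper_hemicont (Tmap p R)
    \<and> (\<forall>x. convex (Tmap p R x) \<and> compact (Tmap p R x))
    \<and> ((\<forall>\<nu> x. convex (Us p R \<nu> x)) \<longrightarrow> (\<forall>x. Tmap p R x \<noteq> {}))"
proof -
  define C where "C \<nu> x = convex hull (Nnu p R \<nu> x \<inter> unit_sphere_nu p \<nu>)" for \<nu> x
  have T: "Tmap p R = (\<lambda>x. {z. \<forall>\<nu>. blk p \<nu> z \<in> C \<nu> x})"
    by (simp add: Tmap_def C_def fun_eq_iff)
  have C_player_space: "C \<nu> x \<subseteq> player_space p \<nu>" for \<nu> x
    unfolding C_def
    by (rule hull_minimal) (auto simp: unit_sphere_nu_def subspace_imp_convex subspace_player_space)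
  have compact_T: "compact (Tmap p R x)" for x
    unfolding T C_def by (intro compact_blockwise compact_convex_hull compact_normal_sphere)
  have "upper_hemicont (\<lambda>x. Nnu p R \<nu> x \<inter> unit_sphere_nu p \<nu>)" for \<nu>
    using assms(2)
    by (intro upper_hemicont_if_closed_graph[OF compact_unit_sphere_nu] closed_graph_normal_sphere) auto
  then have "hausdorff_upper_semicont (C \<nu>)" for \<nu>
    unfolding C_def
    by (intro hausdorff_upper_semicont_convex_hull)
      (simp add: upper_hemicont_iff_hausdorff_upper_semicont compact_normal_sphere)
  then have "upper_hemicont (Tmap p R)"
    using compact_T
    by (simp add: upper_hemicont_iff_hausdorff_upper_semicont T hausdorff_upper_semicont_blockwise
        C_player_space)
  moreover have "convex (Tmap p R x)" for x
    unfolding T C_def by (intro convex_blockwise convex_convex_hull)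
  moreover have "Tmap p R x \<noteq> {}" if "\<forall>\<nu> x. convex (Us p R \<nu> x)" for x
    unfolding T using that
    by (intro blockwise_nonempty C_player_space) (simp add: C_def normal_sphere_nonempty assms(1))
  ultimately show ?thesis
    using compact_T by blast
qed

end
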